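(* Consider the constrained nonlinear system $x(k+1)=f(x(k),u(k))$ with $f(0,0)=0$, input constraint $u\in\mathcal{U}=\{u=[u_1,\dots,u_m]^T\in\mathbb{R}^m:|u_i|\le\bar u_i,\ i=1,\dots,m\}$ and state constraint $x\in\mathcal{X}$ with $0\in\mathcal{X}$. For a horizon $N\ge 1$ and a stage cost $l$, let $$J(x(k),U(k|k))=\sum_{i=0}^{N-1} l\big(x(k+i+1|k),u(k+i|k)\big),$$ where $U(k|k)=[u(k|k)^T,\dots,u(k+N-1|k)^T]^T$, $x(k|k)=x(k)$ and $x(k+i+1|k)=f(x(k+i|k),u(k+i|k))$, and let $J^*(x(k))=\min J(x(k),U(k|k))$ over $u(k+i|k)\in\mathcal{U}$ subject to the dynamics and $x(k+i+1|k)\in\mathcal{X}$, $i=0,\dots,N-1$, with optimal control sequence $u^*(k|k),\dots,u^*(k+N-1|k)$ and optimal predicted states $x^*(k+1|k),\dots,x^*(k+N|k)$. The MPC law applies $u(k)=u^*(k|k)$. Assume there exist $\alpha_1,\alpha_2\in\mathcal{K}_\infty$ with $\alpha_1(\|x\|)\le J^*(x)\le\alpha_2(\|x\|)$ for all $x\in\mathcal{X}$. Suppose the optimisation problem is feasible at the initial state $x(0)=x_0$ and that (at each time $k$ at which it is solved) there exists a control $u(k+N|k)\in\mathcal{U}$ such that $x(k+N+1|k)=f(x^*(k+N|k),u(k+N|k))\in\mathcal{X}$ and $$l\big(x(k+N+1|k),u(k+N|k)\big)-l\big(x^*(k+1|k),u^*(k|k)\big)\le 0.$$ Then (1) the optimisation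 problem is recursively feasible, and (2) the closed-loop system under this MPC algorithm is stable.
   Context: A function $\phi:\mathbb{R}_+\to\mathbb{R}_+$ is of class $\mathcal{K}$ if it is continuous, strictly increasing and $\phi(0)=0$; it is of class $\mathcal{K}_\infty$ if in addition it is radially unbounded. Stability refers to stability of the origin of the closed-loop system $x(k+1)=f(x(k),u^*(k|k))$. *)

theory Defs
  imports "HOL-Analysis.Analysis"
begin

definition classK :: "(real \<Rightarrow> real) \<Rightarrow> bool" where
  "classK \<phi> \<longleftrightarrow> continuous_on {0..} \<phi> \<and> strict_mono_on {0..} \<phi> \<and> \<phi> 0 = 0"

definition classKinf :: "(real \<Rightarrow> real) \<Rightarrow> bool" where
  "classKinf \<phi> \<longleftrightarrow> classK \<phi> \<and> filterlim \<phi> at_top at_top"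

definition input_set :: "real^'m \<Rightarrow> (real^'m) set" where
  "input_set ubar = {u. \<forall>i. \<bar>u $ i\<bar> \<le> ubar $ i}"

fun pred :: "('x \<Rightarrow> 'u \<Rightarrow> 'x) \<Rightarrow> 'x \<Rightarrow> (nat \<Rightarrow> 'u) \<Rightarrow> nat \<Rightarrow> 'x" where
  "pred f x us 0 = x"
| "pred f x us (Suc i) = f (pred f x us i) (us i)"

definition cost :: "('x \<Rightarrow> 'u \<Rightarrow> 'x) \<Rightarrow> ('x \<Rightarrow> 'u \<Rightarrow> real) \<Rightarrow> nat \<Rightarrow> 'x \<Rightarrow> (nat \<Rightarrow> 'u) \<Rightarrow> real" where
  "cost f l N x us = (\<Sum>i<N. l (pred f x us (Suc i)) (us i))"

definition feasible_seq :: "('x \<Rightarrow> 'u \<Rightarrow> 'x) \<Rightarrow> 'u set \<Rightarrow> 'x set \<Rightarrow> nat \<Rightarrow> 'x \<Rightarrow> (nat \<Rightarrow> 'u) \<Rightarrow> bool" where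
  "feasible_seq f U X N x us \<longleftrightarrow> (\<forall>i<N. us i \<in> U \<and> pred f x us (Suc i) \<in> X)"

definition feasible :: "('x \<Rightarrow> 'u \<Rightarrow> 'x) \<Rightarrow> 'u set \<Rightarrow> 'x set \<Rightarrow> nat \<Rightarrow> 'x \<Rightarrow> bool" where
  "feasible f U X N x \<longleftrightarrow> (\<exists>us. feasible_seq f U X N x us)"

definition Jstar :: "('x \<Rightarrow> 'u \<Rightarrow> 'x) \<Rightarrow> ('x \<Rightarrow> 'u \<Rightarrow> real) \<Rightarrow> 'u set \<Rightarrow> 'x set \<Rightarrow> nat \<Rightarrow> 'x \<Rightarrow> real" where
  "Jstar f l U X N x = Inf {cost f l N x us | us. feasible_seq f U X N x us}"

definition is_optimizer :: "('x \<Rightarrow> 'u \<Rightarrow> 'x) \<Rightarrow> ('x \<Rightarrow> 'u \<Rightarrow> real) \<Rightarrow> 'u set \<Rightarrow> 'x set \<Rightarrow> nat \<Rightarrow> ('x \<Rightarrow> nat \<Rightarrow> 'u) \<Rightarrow> bool" where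
  "is_optimizer f l U X N opt \<longleftrightarrow>
     (\<forall>x. feasible f U X N x \<longrightarrow> feasible_seq f U X N x (opt x) \<and>
        (\<forall>us. feasible_seq f U X N x us \<longrightarrow> cost f l N x (opt x) \<le> cost f l N x us))"

fun closed_loop :: "('x \<Rightarrow> 'u \<Rightarrow> 'x) \<Rightarrow> ('x \<Rightarrow> nat \<Rightarrow> 'u) \<Rightarrow> 'x \<Rightarrow> nat \<Rightarrow> 'x" where
  "closed_loop f opt x0 0 = x0"
| "closed_loop f opt x0 (Suc k) = f (closed_loop f opt x0 k) (opt (closed_loop f opt x0 k) 0)"

definition terminal_cond :: "('x \<Rightarrow> 'u \<Rightarrow> 'x) \<Rightarrow> ('x \<Rightarrow> 'u \<Rightarrow> real) \<Rightarrow> 'u set \<Rightarrow> 'x set \<Rightarrow> nat \<Rightarrow> ('x \<Rightarrow> nat \<Rightarrow> 'u) \<Rightarrow> 'x \<Rightarrow> bool" where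
  "terminal_cond f l U X N opt x \<longleftrightarrow>
     (\<exists>v\<in>U. f (pred f x (opt x) N) v \<in> X \<and>
        l (f (pred f x (opt x) N) v) v - l (pred f x (opt x) 1) (opt x 0) \<le> 0)"

definition admissible_init where
  "admissible_init f l U X N opt x0 \<longleftrightarrow> x0 \<in> X \<and> feasible f U X N x0 \<and>
     (\<forall>k. feasible f U X N (closed_loop f opt x0 k) \<longrightarrow>
          terminal_cond f l U X N opt (closed_loop f opt x0 k))"

end

theory Submission
  imports Defs
begin

text \<open>If \<open>u\<^sup>*(k|k), \<dots>, u\<^sup>*(k+N-1|k)\<close> is optimal at \<open>x(k)\<close>, then the shifted sequence
  \<open>u\<^sup>*(k+1|k), \<dots>, u\<^sup>*(k+N-1|k), u(k+N|k)\<close> is feasible at \<open>x(k+1)\<close>, and its cost differs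
  from \<open>J\<^sup>*(x(k))\<close> by exactly the left-hand side of the terminal condition. Hence the problem stays
  feasible and \<open>J\<^sup>*\<close> is nonincreasing along the closed loop; squeezed between \<open>\<alpha>\<^sub>1(\<parallel>x\<parallel>)\<close> and
  \<open>\<alpha>\<^sub>2(\<parallel>x\<parallel>)\<close>, it is a Lyapunov function.\<close>

lemma pred_cong:
  assumes "\<And>j. j < i \<Longrightarrow> us j = vs j"
  shows "pred f x us i = pred f x vs i"
  using assms by (induction i) auto

lemma pred_shift: "pred f (f x (us 0)) (\<lambda>i. us (Suc i)) i = pred f x us (Suc i)"
  by (induction i) auto

definition shift_extend :: "(nat \<Rightarrow> 'u) \<Rightarrow> nat \<Rightarrow> 'u \<Rightarrow> nat \<Rightarrow> 'u" where
  "shift_extend us M v = (\<lambda>i. if i < M then us (Suc i) else v)"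

lemma shift_extend_less: "i < M \<Longrightarrow> shift_extend us M v i = us (Suc i)"
  and shift_extend_last: "shift_extend us M v M = v"
  by (simp_all add: shift_extend_def)

lemma pred_shift_extend:
  assumes "i \<le> M"
  shows "pred f (f x (us 0)) (shift_extend us M v) i = pred f x us (Suc i)"
proof -
  have "pred f (f x (us 0)) (shift_extend us M v) i = pred f (f x (us 0)) (\<lambda>i. us (Suc i)) i"
    using assms by (intro pred_cong) (simp add: shift_extend_def)
  then show ?thesis by (simp add: pred_shift)
qed

lemma pred_shift_extend_last:
  "pred f (f x (us 0)) (shift_extend us M v) (Suc M) = f (pred f x us (Suc M)) v"
  by (simp only: pred.simps(2) pred_shift_extend[of M M] order_refl shift_extend_last)

lemma feasible_seq_shift_extend:
  assumes fs: "feasible_seq f U X (Suc M) x us"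
    and v: "v \<in> U" "f (pred f x us (Suc M)) v \<in> X"
  shows "feasible_seq f U X (Suc M) (f x (us 0)) (shift_extend us M v)"
  unfolding feasible_seq_def
proof (intro allI impI)
  fix i assume "i < Suc M"
  then consider "i < M" | "i = M" by linarith
  then show "shift_extend us M v i \<in> U \<and> pred f (f x (us 0)) (shift_extend us M v) (Suc i) \<in> X"
  proof cases
    case 1
    then have "pred f (f x (us 0)) (shift_extend us M v) (Suc i) = pred f x us (Suc (Suc i))"
      by (simp add: pred_shift_extend del: pred.simps)
    then show ?thesis
      using fs \<open>i < M\<close> unfolding feasible_seq_def by (auto simp: shift_extend_less)
  next
    case 2
    then show ?thesis using v by (simp only: pred_shift_extend_last shift_extend_last)
  qed
qed

lemma cost_shift_extend:
  "cost f l (Suc M) (f x (us 0)) (shift_extend us M v) =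
     cost f l (Suc M) x us - l (pred f x us 1) (us 0) + l (f (pred f x us (Suc M)) v) v"
proof -
  let ?tail = "\<Sum>i<M. l (pred f x us (Suc (Suc i))) (us (Suc i))"
  have "(\<Sum>i<M. l (pred f (f x (us 0)) (shift_extend us M v) (Suc i)) (shift_extend us M v i)) = ?tail"
    by (intro sum.cong) (simp_all add: pred_shift_extend shift_extend_less del: pred.simps)
  then have "cost f l (Suc M) (f x (us 0)) (shift_extend us M v) = ?tail + l (f (pred f x us (Suc M)) v) v"
    unfolding cost_def sum.lessThan_Suc pred_shift_extend_last by (simp only: shift_extend_last)
  moreover have "cost f l (Suc M) x us = l (pred f x us 1) (us 0) + ?tail"
    unfolding cost_def by (subst sum.lessThan_Suc_shift) simp
  ultimately show ?thesis by simp
qed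

lemma Jstar_eq_cost_optimizer:
  assumes "is_optimizer f l U X N opt" "feasible f U X N x"
  shows "Jstar f l U X N x = cost f l N x (opt x)"
  unfolding Jstar_def
  by (rule cInf_eq_minimum) (use assms in \<open>auto simp: is_optimizer_def\<close>)

lemma mpc_step:
  assumes opt: "is_optimizer f l U X (Suc M) opt" and fe: "feasible f U X (Suc M) x"
    and tc: "terminal_cond f l U X (Suc M) opt x"
  shows "f x (opt x 0) \<in> X"
    and "feasible f U X (Suc M) (f x (opt x 0))"
    and "Jstar f l U X (Suc M) (f x (opt x 0)) \<le> Jstar f l U X (Suc M) x"
proof -
  let ?x' = "f x (opt x 0)"
  have fs: "feasible_seq f U X (Suc M) x (opt x)"
    using opt fe unfolding is_optimizer_def by auto
  then show "?x' \<in> X" unfolding feasible_seq_def by auto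
  obtain v where v: "v \<in> U" "f (pred f x (opt x) (Suc M)) v \<in> X"
    and decrease: "l (f (pred f x (opt x) (Suc M)) v) v - l (pred f x (opt x) 1) (opt x 0) \<le> 0"
    using tc unfolding terminal_cond_def by auto
  let ?us = "shift_extend (opt x) M v"
  have fs': "feasible_seq f U X (Suc M) ?x' ?us"
    using feasible_seq_shift_extend[OF fs v] .
  then show fe': "feasible f U X (Suc M) ?x'" unfolding feasible_def by blast
  have "Jstar f l U X (Suc M) ?x' = cost f l (Suc M) ?x' (opt ?x')"
    using Jstar_eq_cost_optimizer[OF opt fe'] .
  also have "\<dots> \<le> cost f l (Suc M) ?x' ?us"
    using opt fe' fs' unfolding is_optimizer_def by auto
  also have "\<dots> \<le> cost f l (Suc M) x (opt x)"
    using decrease by (simp add: cost_shift_extend)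
  also have "\<dots> = Jstar f l U X (Suc M) x"
    using Jstar_eq_cost_optimizer[OF opt fe] by simp
  finally show "Jstar f l U X (Suc M) ?x' \<le> Jstar f l U X (Suc M) x" .
qed

lemma closed_loop_invariant:
  assumes opt: "is_optimizer f l U X (Suc M) opt"
    and init: "admissible_init f l U X (Suc M) opt y0"
  shows "closed_loop f opt y0 k \<in> X \<and> feasible f U X (Suc M) (closed_loop f opt y0 k) \<and>
         Jstar f l U X (Suc M) (closed_loop f opt y0 k) \<le> Jstar f l U X (Suc M) y0"
proof (induction k)
  case 0
  then show ?case using init unfolding admissible_init_def by auto
next
  case (Suc k)
  then have "terminal_cond f l U X (Suc M) opt (closed_loop f opt y0 k)"
    using init unfolding admissible_init_def by auto
  with Suc show ?case using mpc_step[OF opt] by (auto intro: order_trans)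
qed

lemma classK_less_iff:
  assumes "classK \<alpha>" "0 \<le> s" "0 \<le> t"
  shows "\<alpha> s < \<alpha> t \<longleftrightarrow> s < t"
  using assms strict_mono_on_less[of "{0..}" \<alpha> s t] unfolding classK_def by auto

lemma classK_small_near_zero:
  assumes "classK \<alpha>" "0 < c"
  obtains \<delta> where "0 < \<delta>" "\<And>s. 0 \<le> s \<Longrightarrow> s < \<delta> \<Longrightarrow> \<alpha> s < c"
proof -
  have "continuous_on {0..} \<alpha>" "\<alpha> 0 = 0"
    using assms(1) unfolding classK_def by auto
  with assms(2) obtain \<delta> where "0 < \<delta>" "\<And>s. 0 \<le> s \<Longrightarrow> dist s 0 < \<delta> \<Longrightarrow> dist (\<alpha> s) 0 < c"
    unfolding continuous_on_iff by (metis atLeast_iff order_refl)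
  then show ?thesis using that by fastforce
qed

lemma nonincreasing_Lyapunov_stable:
  fixes V :: "'a::real_normed_vector \<Rightarrow> real"
  assumes K1: "classK \<alpha>1" and K2: "classK \<alpha>2" and "0 < \<epsilon>"
  obtains \<delta> where "0 < \<delta>"
    "\<And>x y. norm y < \<delta> \<Longrightarrow> \<alpha>1 (norm x) \<le> V x \<Longrightarrow> V x \<le> V y \<Longrightarrow> V y \<le> \<alpha>2 (norm y) \<Longrightarrow>
       norm x < \<epsilon>"
proof -
  have "\<alpha>1 0 < \<alpha>1 \<epsilon>" using classK_less_iff[OF K1] \<open>0 < \<epsilon>\<close> by simp
  then have "0 < \<alpha>1 \<epsilon>" using K1 unfolding classK_def by simp
  then obtain \<delta> where "0 < \<delta>" and small: "\<And>s. 0 \<le> s \<Longrightarrow> s < \<delta> \<Longrightarrow> \<alpha>2 s < \<alpha>1 \<epsilon>"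
    using classK_small_near_zero[OF K2] by blast
  moreover have "norm x < \<epsilon>"
    if "norm y < \<delta>" "\<alpha>1 (norm x) \<le> V x" "V x \<le> V y" "V y \<le> \<alpha>2 (norm y)" for x y
  proof -
    have "\<alpha>1 (norm x) < \<alpha>1 \<epsilon>" using that small[of "norm y"] by simp
    then show ?thesis using classK_less_iff[OF K1] \<open>0 < \<epsilon>\<close> by simp
  qed
  ultimately show ?thesis using that by blast
qed

theorem theorem4:
  fixes f :: "real^'n \<Rightarrow> real^'m \<Rightarrow> real^'n"
    and l :: "real^'n \<Rightarrow> real^'m \<Rightarrow> real"
    and ubar :: "real^'m"
    and X :: "(real^'n) set"
    and N :: nat
    and opt :: "real^'n \<Rightarrow> nat \<Rightarrow> real^'m"
    and \<alpha>1 \<alpha>2 :: "real \<Rightarrow> real"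
    and x0 :: "real^'n"
  assumes f0: "f 0 0 = 0"
    and X0: "0 \<in> X"
    and N1: "N \<ge> 1"
    and opt: "is_optimizer f l (input_set ubar) X N opt"
    and K1: "classKinf \<alpha>1" and K2: "classKinf \<alpha>2"
    and bounds: "\<forall>x\<in>X. feasible f (input_set ubar) X N x \<longrightarrow>
        \<alpha>1 (norm x) \<le> Jstar f l (input_set ubar) X N x \<and>
        Jstar f l (input_set ubar) X N x \<le> \<alpha>2 (norm x)"
    and init: "admissible_init f l (input_set ubar) X N opt x0"
  shows "(\<forall>k. feasible f (input_set ubar) X N (closed_loop f opt x0 k)) \<and>
         (\<forall>\<epsilon>>0. \<exists>\<delta>>0. \<forall>y0. admissible_init f l (input_set ubar) X N opt y0 \<and> norm y0 < \<delta> \<longrightarrow>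
             (\<forall>k. norm (closed_loop f opt y0 k) < \<epsilon>))"
proof -
  txt \<open>Stability here is local.\<close>
  obtain M where M: "N = Suc M" using N1 by (cases N) auto
  note invariant = closed_loop_invariant[OF opt[unfolded M], folded M]
  have "\<exists>\<delta>>0. \<forall>y0. admissible_init f l (input_set ubar) X N opt y0 \<and> norm y0 < \<delta> \<longrightarrow>
          (\<forall>k. norm (closed_loop f opt y0 k) < \<epsilon>)" if "0 < \<epsilon>" for \<epsilon>
  proof -
    have "classK \<alpha>1" "classK \<alpha>2" using K1 K2 unfolding classKinf_def by auto
    then obtain \<delta> where "0 < \<delta>" and stable: "\<And>x y. norm y < \<delta> \<Longrightarrow>
        \<alpha>1 (norm x) \<le> Jstar f l (input_set ubar) X N x \<Longrightarrow>
        Jstar f l (input_set ubar) X N x \<le> Jstar f l (input_set ubar) X N y \<Longrightarrow>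
        Jstar f l (input_set ubar) X N y \<le> \<alpha>2 (norm y) \<Longrightarrow> norm x < \<epsilon>"
      using nonincreasing_Lyapunov_stable \<open>0 < \<epsilon>\<close> by blast
    have "norm (closed_loop f opt y0 k) < \<epsilon>"
      if "admissible_init f l (input_set ubar) X N opt y0" "norm y0 < \<delta>" for y0 k
      using stable[OF \<open>norm y0 < \<delta>\<close>] bounds invariant[OF that(1), of k] invariant[OF that(1), of 0]
      by simp
    with \<open>0 < \<delta>\<close> show ?thesis by blast
  qed
  then show ?thesis using invariant[OF init] by blast
qed

end
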